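(* Consider the uplink system and the transmit-power minimization problem described in the context. Let $(\mathbf{x},\mathbf{y},\mathbf{W},\mathbf{p})$ be any point satisfying the constraints of that problem (with the antenna-moving-region constraints $0\le x_m\le x_{\max}$, $0\le y_n\le y_{\max}$ omitted, i.e. the region may be arbitrarily large), where every combining vector $\mathbf{w}_k$ is nonzero. Then for every user $k$, $1\le k\le K$, $$p_k\;\ge\;\bar p_k:=\frac{\sigma^2\,(2^{r_k}-1)}{MN\,\|\mathbf{b}_k\|_1^2}.$$
   Context: A base station (BS) has a cross-linked movable antenna array with $M$ columns and $N$ rows of antennas ($MN$ antennas). The horizontal antenna position vector (APV) is $\mathbf{x}=[x_1,\dots,x_M]^{\mathrm T}\in\mathbb{R}^M$ (horizontal coordinate of the $m$-th column), the vertical APV is $\mathbf{y}=[y_1,\dots,y_N]^{\mathrm T}\in\mathbb{R}^N$ (vertical coordinate of the $n$-th row); antenna $(m,n)$ sits at $(x_m,y_n)$. There are $K$ single-antenna users. User $k$ has $L_k$ channel paths with virtual angles $\vartheta_{k,\ell},\varphi_{k,\ell}\in[-1,1]$ and path-response vector $\mathbf{b}_k=[b_{k,1},\dots,b_{k,L_k}]^{\mathrm T}\in\mathbb{C}^{L_k}$, $\mathbf{b}_k\neq\mathbf{0}$; $\lambda>0$ is the wavelength. The channel $\mathbf{h}_k(\mathbf{x},\mathbf{y})\in\mathbb{C}^{MN}$ has entry indexed by $(m-1)N+n$ equal to $\sum_{\ell=1}^{L_k} b_{k,\ell}\,e^{-\mathrm{j}\frac{2\pi}{\lambda}(x_m\vartheta_{k,\ell}+y_n\varphi_{k,\ell})}$.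 With receive combining matrix $\mathbf{W}=[\mathbf{w}_1,\dots,\mathbf{w}_K]\in\mathbb{C}^{MN\times K}$, transmit powers $\mathbf{p}=(p_1,\dots,p_K)$ and noise power $\sigma^2>0$, the SINR of user $k$ is $$\gamma_k=\frac{|\mathbf{w}_k^{\mathrm H}\mathbf{h}_k(\mathbf{x},\mathbf{y})|^2p_k}{\sum_{q\ne k}|\mathbf{w}_k^{\mathrm H}\mathbf{h}_q(\mathbf{x},\mathbf{y})|^2p_q+\|\mathbf{w}_k\|_2^2\sigma^2}.$$ The problem is: minimize $\sum_{k=1}^K p_k$ over $\mathbf{x},\mathbf{y},\mathbf{W},\mathbf{p}$ subject to $\log_2(1+\gamma_k)\ge r_k$ and $p_k\ge0$ for all $k$ (given rate requirements $r_k\ge 0$), $0\le x_m\le x_{\max}$, $x_{m+1}-x_m\ge d_{\min,x}$ ($1\le m\le M-1$), $0\le y_n\le y_{\max}$, $y_{n+1}-y_n\ge d_{\min,y}$ ($1\le n\le N-1$), with given $d_{\min,x},d_{\min,y}>0$. $\|\cdot\|_1$ is the $\ell_1$ norm. *)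

theory Defs
  imports "HOL-Analysis.Analysis"
begin

text \<open>The MN-dimensional vectors are represented as functions
  of the pair (m,n); the entry (m-1)N+n corresponds to (m,n).\<close>

definition chan ::
  "(nat \<Rightarrow> nat) \<Rightarrow> (nat \<Rightarrow> nat \<Rightarrow> complex) \<Rightarrow> (nat \<Rightarrow> nat \<Rightarrow> real) \<Rightarrow>
   (nat \<Rightarrow> nat \<Rightarrow> real) \<Rightarrow> real \<Rightarrow> (nat \<Rightarrow> real) \<Rightarrow> (nat \<Rightarrow> real) \<Rightarrow>
   nat \<Rightarrow> nat \<Rightarrow> nat \<Rightarrow> complex" where
  "chan L b \<theta> \<phi> lam x y k m n =
     (\<Sum>l\<in>{1..L k}. b k l *
        exp (- \<i> * complex_of_real (2 * pi / lam * (x m * \<theta> k l + y n * \<phi> k l))))"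

definition herm_ip :: "nat \<Rightarrow> nat \<Rightarrow> (nat \<Rightarrow> nat \<Rightarrow> complex) \<Rightarrow> (nat \<Rightarrow> nat \<Rightarrow> complex) \<Rightarrow> complex" where
  "herm_ip M N w h = (\<Sum>m\<in>{1..M}. \<Sum>n\<in>{1..N}. cnj (w m n) * h m n)"

definition sqnorm :: "nat \<Rightarrow> nat \<Rightarrow> (nat \<Rightarrow> nat \<Rightarrow> complex) \<Rightarrow> real" where
  "sqnorm M N w = (\<Sum>m\<in>{1..M}. \<Sum>n\<in>{1..N}. (cmod (w m n))\<^sup>2)"

definition sinr ::
  "nat \<Rightarrow> nat \<Rightarrow> nat \<Rightarrow> (nat \<Rightarrow> nat \<Rightarrow> nat \<Rightarrow> complex) \<Rightarrow> (nat \<Rightarrow> nat \<Rightarrow> nat \<Rightarrow> complex) \<Rightarrow>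
   (nat \<Rightarrow> real) \<Rightarrow> real \<Rightarrow> nat \<Rightarrow> real" where
  "sinr M N K H W p \<sigma>2 k =
     (cmod (herm_ip M N (W k) (H k)))\<^sup>2 * p k /
     ((\<Sum>q\<in>{1..K} - {k}. (cmod (herm_ip M N (W k) (H q)))\<^sup>2 * p q) + sqnorm M N (W k) * \<sigma>2)"

end

theory Submission
  imports Defs
begin

text \<open>Dropping the interference term and applying Cauchy--Schwarz to the signal term,
  the norm of the combining vector cancels against the noise, so the SINR of user k is
  at most the channel gain times p k / \<sigma>2. Every steering phase has modulus one, so by
  the triangle inequality each of the MN channel entries is bounded by the l1 norm of
  the path responses, whatever the antenna positions are. The rate constraint then
  gives 2 powr r k - 1 \<le> SINR \<le> MN (sum of cmod (b k l))^2 p k / \<sigma>2.\<close>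

lemma cmod_sum_cnj_mult_squared_le:
  fixes w h :: "'a \<Rightarrow> complex"
  shows "(cmod (\<Sum>i\<in>I. cnj (w i) * h i))\<^sup>2 \<le> (\<Sum>i\<in>I. (cmod (w i))\<^sup>2) * (\<Sum>i\<in>I. (cmod (h i))\<^sup>2)"
proof -
  have "cmod (\<Sum>i\<in>I. cnj (w i) * h i) \<le> (\<Sum>i\<in>I. cmod (w i) * cmod (h i))"
    by (rule order_trans[OF norm_sum]) (simp add: norm_mult)
  then have "(cmod (\<Sum>i\<in>I. cnj (w i) * h i))\<^sup>2 \<le> (\<Sum>i\<in>I. cmod (w i) * cmod (h i))\<^sup>2"
    by (simp add: power_mono)
  also have "\<dots> \<le> (\<Sum>i\<in>I. (cmod (w i))\<^sup>2) * (\<Sum>i\<in>I. (cmod (h i))\<^sup>2)"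
    by (rule Cauchy_Schwarz_ineq_sum)
  finally show ?thesis .
qed

lemma herm_ip_squared_le: "(cmod (herm_ip M N w h))\<^sup>2 \<le> sqnorm M N w * sqnorm M N h"
proof -
  have "herm_ip M N w h = (\<Sum>(m,n)\<in>{1..M}\<times>{1..N}. cnj (w m n) * h m n)"
    unfolding herm_ip_def by (rule sum.cartesian_product)
  moreover have "\<And>v. sqnorm M N v = (\<Sum>(m,n)\<in>{1..M}\<times>{1..N}. (cmod (v m n))\<^sup>2)"
    unfolding sqnorm_def by (rule sum.cartesian_product)
  ultimately show ?thesis
    using cmod_sum_cnj_mult_squared_le[of "case_prod w" "case_prod h" "{1..M}\<times>{1..N}"]
    by (simp add: case_prod_unfold)
qed

lemma sqnorm_pos:
  assumes "m \<in> {1..M}" and "n \<in> {1..N}" and "w m n \<noteq> 0"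
  shows "sqnorm M N w > 0"
proof -
  have "(\<Sum>j\<in>{1..N}. (cmod (w m j))\<^sup>2) > 0"
    using assms(2,3) by (auto intro!: sum_pos2[of _ n])
  then show ?thesis
    unfolding sqnorm_def using assms(1) by (auto intro!: sum_pos2[of _ m] sum_nonneg)
qed

lemma cmod_chan_le: "cmod (chan L b \<theta> \<phi> lam x y k m n) \<le> (\<Sum>l\<in>{1..L k}. cmod (b k l))"
proof -
  have "cmod (chan L b \<theta> \<phi> lam x y k m n) \<le> (\<Sum>l\<in>{1..L k}. cmod (b k l *
        exp (- \<i> * complex_of_real (2 * pi / lam * (x m * \<theta> k l + y n * \<phi> k l)))))"
    unfolding chan_def by (rule norm_sum)
  also have "\<dots> = (\<Sum>l\<in>{1..L k}. cmod (b k l))"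
    by (simp add: norm_mult norm_exp_eq_Re)
  finally show ?thesis .
qed

lemma sqnorm_chan_le:
  "sqnorm M N (chan L b \<theta> \<phi> lam x y k) \<le> real M * real N * (\<Sum>l\<in>{1..L k}. cmod (b k l))\<^sup>2"
proof -
  have "sqnorm M N (chan L b \<theta> \<phi> lam x y k)
          \<le> (\<Sum>m\<in>{1..M}. \<Sum>n\<in>{1..N}. (\<Sum>l\<in>{1..L k}. cmod (b k l))\<^sup>2)"
    unfolding sqnorm_def by (intro sum_mono power_mono cmod_chan_le) auto
  then show ?thesis by simp
qed

context
  fixes M N K :: nat and H W :: "nat \<Rightarrow> nat \<Rightarrow> nat \<Rightarrow> complex"
    and p :: "nat \<Rightarrow> real" and \<sigma>2 :: real and k :: nat
  assumes p_nonneg: "\<And>q. q \<in> {1..K} \<Longrightarrow> p q \<ge> 0"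
    and noise_pos: "\<sigma>2 > 0"
    and combiner_nonzero: "sqnorm M N (W k) > 0"
    and k: "k \<in> {1..K}"
begin

private abbreviation interference :: real where
  "interference \<equiv> \<Sum>q\<in>{1..K} - {k}. (cmod (herm_ip M N (W k) (H q)))\<^sup>2 * p q"

private lemma interference_nonneg: "interference \<ge> 0"
  using p_nonneg by (intro sum_nonneg mult_nonneg_nonneg) auto

private lemma sinr_denominator_pos: "interference + sqnorm M N (W k) * \<sigma>2 > 0"
  using interference_nonneg combiner_nonzero noise_pos by (simp add: add_nonneg_pos)

lemma sinr_nonneg: "sinr M N K H W p \<sigma>2 k \<ge> 0"
  unfolding sinr_def using sinr_denominator_pos p_nonneg[OF k] by simp

lemma sinr_le_channel_gain: "sinr M N K H W p \<sigma>2 k \<le> sqnorm M N (H k) * p k / \<sigma>2"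
proof -
  let ?nw = "sqnorm M N (W k)"
  have "sinr M N K H W p \<sigma>2 k \<le> (cmod (herm_ip M N (W k) (H k)))\<^sup>2 * p k / (?nw * \<sigma>2)"
    unfolding sinr_def
    using sinr_denominator_pos interference_nonneg p_nonneg[OF k] combiner_nonzero noise_pos
    by (intro divide_left_mono mult_nonneg_nonneg) auto
  also have "\<dots> \<le> ?nw * sqnorm M N (H k) * p k / (?nw * \<sigma>2)"
    using p_nonneg[OF k] combiner_nonzero noise_pos
    by (intro divide_right_mono mult_right_mono herm_ip_squared_le) auto
  also have "\<dots> = sqnorm M N (H k) * p k / \<sigma>2"
    using combiner_nonzero by simp
  finally show ?thesis .
qed

end

lemma rate_constraint_imp_sinr_ge:
  assumes "log 2 (1 + s) \<ge> r" and "s \<ge> 0"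
  shows "2 powr r - 1 \<le> s"
  using assms le_log_iff[of 2 "1 + s" r] by simp

theorem theorem1:
  fixes M N K :: nat
    and L :: "nat \<Rightarrow> nat"
    and \<theta> \<phi> :: "nat \<Rightarrow> nat \<Rightarrow> real"
    and b :: "nat \<Rightarrow> nat \<Rightarrow> complex"
    and lam \<sigma>2 dminx dminy :: real
    and r :: "nat \<Rightarrow> real"
    and x y :: "nat \<Rightarrow> real"
    and W :: "nat \<Rightarrow> nat \<Rightarrow> nat \<Rightarrow> complex"
    and p :: "nat \<Rightarrow> real"
  assumes lam: "lam > 0"
    and sig: "\<sigma>2 > 0"
    and dx: "dminx > 0" and dy: "dminy > 0"
    and angles: "\<And>k l. k \<in> {1..K} \<Longrightarrow> l \<in> {1..L k} \<Longrightarrow>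
                   \<theta> k l \<in> {-1..1} \<and> \<phi> k l \<in> {-1..1}"
    and bnz: "\<And>k. k \<in> {1..K} \<Longrightarrow> \<exists>l\<in>{1..L k}. b k l \<noteq> 0"
    and rpos: "\<And>k. k \<in> {1..K} \<Longrightarrow> r k \<ge> 0"
    and rate: "\<And>k. k \<in> {1..K} \<Longrightarrow>
       log 2 (1 + sinr M N K (chan L b \<theta> \<phi> lam x y) W p \<sigma>2 k) \<ge> r k"
    and ppos: "\<And>k. k \<in> {1..K} \<Longrightarrow> p k \<ge> 0"
    and xsep: "\<And>m. m \<in> {1..M-1} \<Longrightarrow> x (m+1) - x m \<ge> dminx"
    and ysep: "\<And>n. n \<in> {1..N-1} \<Longrightarrow> y (n+1) - y n \<ge> dminy"
    and wnz: "\<And>k. k \<in> {1..K} \<Longrightarrow> \<exists>m\<in>{1..M}. \<exists>n\<in>{1..N}. W k m n \<noteq> 0"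
  shows "\<forall>k\<in>{1..K}. p k \<ge>
     \<sigma>2 * (2 powr r k - 1) / (real M * real N * (\<Sum>l\<in>{1..L k}. cmod (b k l))\<^sup>2)"
proof
  fix k assume k: "k \<in> {1..K}"
  define H where "H = chan L b \<theta> \<phi> lam x y"
  define D where "D = real M * real N * (\<Sum>l\<in>{1..L k}. cmod (b k l))\<^sup>2"
  have combiner_nonzero: "sqnorm M N (W k) > 0"
    using wnz[OF k] sqnorm_pos by blast
  have sinr_bounds: "sinr M N K H W p \<sigma>2 k \<ge> 0"
    "sinr M N K H W p \<sigma>2 k \<le> sqnorm M N (H k) * p k / \<sigma>2"
    using sinr_nonneg sinr_le_channel_gain ppos sig combiner_nonzero k by blast+
  have "2 powr r k - 1 \<le> sinr M N K H W p \<sigma>2 k"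
    using rate_constraint_imp_sinr_ge rate[OF k] sinr_bounds(1) unfolding H_def by blast
  also have "\<dots> \<le> D * p k / \<sigma>2"
    using sinr_bounds(2) sqnorm_chan_le[of M N L b] ppos[OF k] sig
    unfolding H_def D_def by (meson divide_right_mono mult_right_mono order_trans less_imp_le)
  finally have "\<sigma>2 * (2 powr r k - 1) \<le> D * p k"
    using sig by (simp add: field_simps)
  moreover have "D \<ge> 0"
    unfolding D_def by simp
  \<comment> \<open>D > 0 would follow from wnz and bnz, but D = 0 is harmless: the bound is then 0 = x / 0.\<close>
  ultimately show "p k \<ge> \<sigma>2 * (2 powr r k - 1) / D"
    using ppos[OF k] by (cases "D = 0") (simp_all add: pos_divide_le_eq mult.commute)
qed

end
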